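(* Let $\alpha$ be a cylindric partition on $\mathcal C_{k,n}$ and $m$ a nonnegative integer. Let $M$ be the set of cylindric partitions $\mu\subseteq\alpha$ such that $\alpha/\mu$ contains exactly $m$ boxes, and $\Lambda$ the set of cylindric partitions $\lambda\supseteq\alpha$ such that $\lambda/\alpha$ contains exactly $m$ boxes. Then \[ \sum_{\mu\in M}f_{\alpha/\mu}=\sum_{\lambda\in\Lambda}f_{\lambda/\alpha}. \]
   Context: Fix integers $n>k\ge1$. A cylindric partition is a weakly decreasing integer sequence $(\lambda_m)_{m\in\mathbb Z}$ with $\lambda_m=\lambda_{m+k}+n-k$. A point $(x,y)\in\mathbb Z^2$ lies in $\lambda$ if $y\le\lambda_x$. Boxes are classes of points modulo translation by multiples of $(-k,n-k)$; $\pi$ the projection; a box lies in $\lambda$ iff its representatives do. $\mu\subseteq\lambda$ means $\mu_m\le\lambda_m$ for all $m$; boxes of $\lambda/\mu$ are boxes in $\lambda$ not in $\mu$. A semistandard cylindric tableau of shape $\lambda/\mu$ with values in a totally ordered set is a map $R$ from boxes of $\lambda/\mu$ to it with $R(\pi(x,y_1))\le R(\pi(x,y_2))$ whenever $(x,y_1),(x,y_2)$ lie in $\lambda$ but not $\mu$ and $y_1<y_2$, and $R(\pi(x_1,y))<R(\pi(x_2,y))$ whenever $(x_1,y),(x_2,y)$ lie in $\lambda$ but not $\mu$ and $x_1<x_2$. A standard cylindric tableau takes values in $\{1,\dots,N\}$ for some $N\ge0$ with each value used exactly once; $f_{\lambda/\mu}$ is the number of standard cylindric tableaux of shape $\lambda/\mu$.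 *)

theory Defs
  imports Main
begin

definition cylindric :: "nat \<Rightarrow> nat \<Rightarrow> (int \<Rightarrow> int) \<Rightarrow> bool" where
  "cylindric k n lam \<longleftrightarrow>
     (\<forall>a b. a \<le> b \<longrightarrow> lam b \<le> lam a) \<and>
     (\<forall>m. lam m = lam (m + int k) + (int n - int k))"

definition in_part :: "(int \<Rightarrow> int) \<Rightarrow> int \<times> int \<Rightarrow> bool" where
  "in_part lam p \<longleftrightarrow> snd p \<le> lam (fst p)"

text \<open>The box containing a point: its class modulo translation by multiples of (-k, n-k).\<close>
definition box_of :: "nat \<Rightarrow> nat \<Rightarrow> int \<times> int \<Rightarrow> (int \<times> int) set" where
  "box_of k n p = {(fst p - t * int k, snd p + t * (int n - int k)) | t. True}"

definition subpart :: "(int \<Rightarrow> int) \<Rightarrow> (int \<Rightarrow> int) \<Rightarrow> bool" where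
  "subpart mu lam \<longleftrightarrow> (\<forall>m. mu m \<le> lam m)"

definition skew_boxes :: "nat \<Rightarrow> nat \<Rightarrow> (int \<Rightarrow> int) \<Rightarrow> (int \<Rightarrow> int) \<Rightarrow> (int \<times> int) set set" where
  "skew_boxes k n lam mu = {box_of k n p | p. in_part lam p \<and> \<not> in_part mu p}"

definition semistandard :: "nat \<Rightarrow> nat \<Rightarrow> (int \<Rightarrow> int) \<Rightarrow> (int \<Rightarrow> int)
    \<Rightarrow> ((int \<times> int) set \<Rightarrow> 'a::linorder) \<Rightarrow> bool" where
  "semistandard k n lam mu R \<longleftrightarrow>
     (\<forall>x y1 y2. in_part lam (x, y1) \<and> \<not> in_part mu (x, y1) \<and>
                in_part lam (x, y2) \<and> \<not> in_part mu (x, y2) \<and> y1 < y2 \<longrightarrow>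
                R (box_of k n (x, y1)) \<le> R (box_of k n (x, y2))) \<and>
     (\<forall>x1 x2 y. in_part lam (x1, y) \<and> \<not> in_part mu (x1, y) \<and>
                in_part lam (x2, y) \<and> \<not> in_part mu (x2, y) \<and> x1 < x2 \<longrightarrow>
                R (box_of k n (x1, y)) < R (box_of k n (x2, y)))"

text \<open>Standard tableaux: bijections from the boxes onto {1..N} (N is then the number of
 boxes), semistandard; maps are normalised to 0 off the boxes so they can be counted.\<close>
definition standard_tableaux :: "nat \<Rightarrow> nat \<Rightarrow> (int \<Rightarrow> int) \<Rightarrow> (int \<Rightarrow> int)
    \<Rightarrow> ((int \<times> int) set \<Rightarrow> nat) set" where
  "standard_tableaux k n lam mu =
     {R. (\<exists>N. bij_betw R (skew_boxes k n lam mu) {1..N}) \<and>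
         (\<forall>b. b \<notin> skew_boxes k n lam mu \<longrightarrow> R b = 0) \<and>
         semistandard k n lam mu R}"

definition num_standard :: "nat \<Rightarrow> nat \<Rightarrow> (int \<Rightarrow> int) \<Rightarrow> (int \<Rightarrow> int) \<Rightarrow> nat" where
  "num_standard k n lam mu = card (standard_tableaux k n lam mu)"

end

theory Submission
  imports Defs
begin

(* Cylindric partitions, ordered by inclusion, form a graded poset in which a cover adds one box.
   Two distinct partitions have a common lower cover exactly when they have a common upper cover
   (their meet and their join), and every partition has as many removable as addable boxes, since
   rotating the cylinder by 180 degrees exchanges the two.  Counting paths of length two, the
   operators D and U summing a function over lower resp. upper covers commute, whence
   D^m 1 = U^m 1.  The largest entry of a standard tableau of shape alpha/mu sits in a maximal box,
   whose removal leaves a lower cover of alpha; so the left-hand side is (D^m 1)(alpha), and after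
   the rotation the right-hand side is (U^m 1)(alpha). *)

definition linear_extensions :: "('b \<Rightarrow> 'b \<Rightarrow> bool) \<Rightarrow> 'b set \<Rightarrow> ('b \<Rightarrow> nat) set" where
  "linear_extensions prec S =
     {R. (\<exists>N. bij_betw R S {1..N}) \<and> (\<forall>b. b \<notin> S \<longrightarrow> R b = 0) \<and>
         (\<forall>b\<in>S. \<forall>c\<in>S. prec b c \<longrightarrow> R b < R c)}"

lemma linear_extension_bij_betw:
  "finite S \<Longrightarrow> R \<in> linear_extensions prec S \<Longrightarrow> bij_betw R S {1..card S}"
  unfolding linear_extensions_def using bij_betw_same_card by fastforce

lemma finite_linear_extensions:
  assumes "finite S"
  shows "finite (linear_extensions prec S)"
proof (rule finite_subset)
  let ?F = "{R. \<forall>x. (x \<in> S \<longrightarrow> R x \<in> {0..card S}) \<and> (x \<notin> S \<longrightarrow> R x = 0)}"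
  show "linear_extensions prec S \<subseteq> ?F"
  proof
    fix R assume R: "R \<in> linear_extensions prec S"
    then have "R ` S = {1..card S}" using linear_extension_bij_betw[OF assms] by (simp add: bij_betw_def)
    then show "R \<in> ?F" using R unfolding linear_extensions_def by auto
  qed
  show "finite ?F" by (rule finite_set_of_finite_funs[OF assms]) simp
qed

lemma linear_extensions_empty [simp]: "linear_extensions prec {} = {\<lambda>_. 0}"
  by (auto simp: linear_extensions_def bij_betw_def intro: exI[of _ 0])

lemma card_eq_by_involution:
  assumes "f ` A \<subseteq> B" "f ` B \<subseteq> A" "\<And>x. x \<in> A \<Longrightarrow> f (f x) = x" "\<And>x. x \<in> B \<Longrightarrow> f (f x) = x"
  shows "card A = card B"
  by (rule bij_betw_same_card[of f], rule bij_betw_byWitness[where f' = f]) (use assms in blast)+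

lemma linear_extensions_comp_involution:
  assumes inv: "\<And>x. h (h x) = x" and R: "R \<in> linear_extensions prec S"
  shows "R \<circ> h \<in> linear_extensions (\<lambda>b c. prec (h b) (h c)) (h ` S)"
proof -
  obtain N where N: "bij_betw R S {1..N}" using R unfolding linear_extensions_def by blast
  have "bij_betw h (h ` S) S"
    by (rule bij_betw_byWitness[where f' = h]) (auto simp: inv image_iff)
  then have "bij_betw (R \<circ> h) (h ` S) {1..N}" using N by (rule bij_betw_trans)
  moreover have "b \<notin> h ` S \<Longrightarrow> h b \<notin> S" for b by (metis inv imageI)
  ultimately show ?thesis using R unfolding linear_extensions_def by (auto simp: inv)
qed

lemma card_linear_extensions_image_involution:
  assumes inv: "\<And>x. h (h x) = x"
  shows "card (linear_extensions prec (h ` S)) = card (linear_extensions (\<lambda>b c. prec (h b) (h c)) S)"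
proof (rule card_eq_by_involution[where f = "\<lambda>R. R \<circ> h"])
  have "h ` h ` S = S" by (force simp: inv image_iff)
  then show "(\<lambda>R. R \<circ> h) ` linear_extensions (\<lambda>b c. prec (h b) (h c)) S \<subseteq> linear_extensions prec (h ` S)"
    "(\<lambda>R. R \<circ> h) ` linear_extensions prec (h ` S) \<subseteq> linear_extensions (\<lambda>b c. prec (h b) (h c)) S"
    using linear_extensions_comp_involution[OF inv, of _ "\<lambda>b c. prec (h b) (h c)" S]
      linear_extensions_comp_involution[OF inv, of _ prec "h ` S"] by (auto simp: inv)
qed (simp_all add: comp_def inv)

lemma card_linear_extensions_converse:
  assumes fin: "finite S"
  shows "card (linear_extensions prec S) = card (linear_extensions (\<lambda>b c. prec c b) S)"
proof -
  define reverse where "reverse R b = (if b \<in> S then Suc (card S) - R b else 0)" for R :: "'a \<Rightarrow> nat" and b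
  have range: "R b \<in> {1..card S}" if "R \<in> linear_extensions p S" "b \<in> S" for R p b
    using linear_extension_bij_betw[OF fin that(1)] that(2) unfolding bij_betw_def by auto
  have reverse_mem: "reverse R \<in> linear_extensions (\<lambda>b c. p c b) S" if R: "R \<in> linear_extensions p S" for R p
  proof -
    have "bij_betw (\<lambda>j. Suc (card S) - j) {1..card S} {1..card S}"
      by (rule bij_betw_byWitness[where f' = "\<lambda>j. Suc (card S) - j"]) auto
    with linear_extension_bij_betw[OF fin R]
    have "bij_betw ((\<lambda>j. Suc (card S) - j) \<circ> R) S {1..card S}" by (rule bij_betw_trans)
    then have "bij_betw (reverse R) S {1..card S}" by (rule bij_betw_cong[THEN iffD1, rotated]) (simp add: reverse_def)
    moreover have "reverse R b < reverse R c" if "b \<in> S" "c \<in> S" "p c b" for b c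
    proof -
      have "R c < R b" using R that unfolding linear_extensions_def by blast
      moreover have "R b \<le> card S" using range[OF R that(1)] by simp
      ultimately show ?thesis using that by (simp add: reverse_def)
    qed
    ultimately show ?thesis unfolding linear_extensions_def reverse_def by auto
  qed
  have reverse_reverse: "reverse (reverse R) = R" if R: "R \<in> linear_extensions p S" for R p
  proof
    fix b show "reverse (reverse R) b = R b"
      using range[OF R, of b] R unfolding reverse_def linear_extensions_def by auto
  qed
  show ?thesis
  proof (rule card_eq_by_involution[where f = reverse])
    show "reverse ` linear_extensions prec S \<subseteq> linear_extensions (\<lambda>b c. prec c b) S"
      by (rule image_subsetI, rule reverse_mem)
    show "reverse ` linear_extensions (\<lambda>b c. prec c b) S \<subseteq> linear_extensions prec S"
      by (rule image_subsetI, drule reverse_mem) simp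
  qed (fact reverse_reverse)+
qed

lemma card_linear_extensions_max_label:
  assumes fin: "finite S" and bS: "b \<in> S" and top: "\<And>c. c \<in> S \<Longrightarrow> \<not> prec b c"
  shows "card {R \<in> linear_extensions prec S. R b = card S} = card (linear_extensions prec (S - {b}))"
proof (rule bij_betw_same_card[of "\<lambda>R. R(b := 0)"],
    rule bij_betw_byWitness[where f' = "\<lambda>R. R(b := card S)"])
  define N where "N = card S"
  have N: "N \<ge> 1" "card (S - {b}) = N - 1" using fin bS by (auto simp: N_def Suc_le_eq card_gt_0_iff)
  have "{1..N} - {N} = {1..N - 1}" "{1..N - 1} \<union> {N} = {1..N}" using N by auto
  note ranges = this
  show "(\<lambda>R. R(b := 0)) ` {R \<in> linear_extensions prec S. R b = card S} \<subseteq> linear_extensions prec (S - {b})"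
  proof (rule image_subsetI, clarify)
    fix R assume R: "R \<in> linear_extensions prec S" "R b = card S"
    have "bij_betw R S {1..N}" using linear_extension_bij_betw[OF fin R(1)] by (simp add: N_def)
    moreover have "bij_betw R {b} {N}" using R(2) by (simp add: N_def bij_betw_def)
    ultimately have "bij_betw R (S - {b}) {1..N - 1}"
      using bij_betw_DiffI[of R S "{1..N}" "{b}" "{N}"] bS N ranges by auto
    then have "bij_betw (R(b := 0)) (S - {b}) {1..N - 1}" by (rule bij_betw_cong[THEN iffD1, rotated]) simp
    then show "R(b := 0) \<in> linear_extensions prec (S - {b})"
      using R(1) unfolding linear_extensions_def by auto
  qed
  show "(\<lambda>R. R(b := card S)) ` linear_extensions prec (S - {b}) \<subseteq> {R \<in> linear_extensions prec S. R b = card S}"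
  proof (rule image_subsetI)
    fix R assume R: "R \<in> linear_extensions prec (S - {b})"
    have bij: "bij_betw R (S - {b}) {1..N - 1}" using linear_extension_bij_betw[OF _ R] fin N by simp
    then have "bij_betw (R(b := N)) (S - {b}) {1..N - 1}" by (rule bij_betw_cong[THEN iffD1, rotated]) simp
    then have "bij_betw (R(b := N)) ((S - {b}) \<union> {b}) ({1..N - 1} \<union> {N})"
      using notIn_Un_bij_betw[of b "S - {b}" "R(b := N)" "{1..N - 1}"] N by simp
    then have "bij_betw (R(b := N)) S {1..N}" using bS ranges by (simp add: insert_absorb)
    moreover have "R c < N" if "c \<in> S - {b}" for c
    proof -
      have "R c \<in> {1..N - 1}" using bij that by (auto simp: bij_betw_def)
      then show ?thesis using N by auto
    qed
    ultimately show "R(b := card S) \<in> {R \<in> linear_extensions prec S. R b = card S}"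
      using R top bS unfolding linear_extensions_def N_def by auto
  qed
qed (auto simp: linear_extensions_def)

lemma card_linear_extensions_maximal:
  assumes fin: "finite S" and ne: "S \<noteq> {}"
  shows "card (linear_extensions prec S) =
           (\<Sum>b \<in> {b \<in> S. \<forall>c\<in>S. \<not> prec b c}. card (linear_extensions prec (S - {b})))"
proof -
  define top where "top = {b \<in> S. \<forall>c\<in>S. \<not> prec b c}"
  define P where "P b = {R \<in> linear_extensions prec S. R b = card S}" for b
  have "linear_extensions prec S = (\<Union>b\<in>top. P b)"
  proof (rule set_eqI, rule iffI)
    fix R assume R: "R \<in> linear_extensions prec S"
    have bij: "bij_betw R S {1..card S}" by (rule linear_extension_bij_betw[OF fin R])
    moreover have "card S \<ge> 1" using fin ne by (simp add: Suc_le_eq card_gt_0_iff)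
    ultimately have "card S \<in> R ` S" by (simp add: bij_betw_def)
    then obtain b where b: "b \<in> S" "R b = card S" by (metis imageE)
    have "\<not> prec b c" if "c \<in> S" for c
    proof
      assume "prec b c"
      then have "R b < R c" using R b(1) that unfolding linear_extensions_def by blast
      moreover have "R c \<le> card S" using bij that by (auto simp: bij_betw_def)
      ultimately show False using b(2) by simp
    qed
    then have "b \<in> top" using b(1) unfolding top_def by blast
    then show "R \<in> (\<Union>b\<in>top. P b)" using R b unfolding P_def by blast
  qed (auto simp: P_def)
  moreover have "P b \<inter> P c = {}" if "b \<in> top" "c \<in> top" "b \<noteq> c" for b c
  proof -
    have "inj_on R S" if "R \<in> linear_extensions prec S" for R
      using linear_extension_bij_betw[OF fin that] by (simp add: bij_betw_def)
    then show ?thesis using that unfolding P_def top_def inj_on_def by force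
  qed
  moreover have "finite top" "\<forall>b\<in>top. finite (P b)"
    using fin finite_linear_extensions[OF fin] by (auto simp: top_def P_def)
  ultimately have "card (linear_extensions prec S) = (\<Sum>b\<in>top. card (P b))"
    by (simp add: card_UN_disjoint)
  also have "\<dots> = (\<Sum>b\<in>top. card (linear_extensions prec (S - {b})))"
    using card_linear_extensions_max_label[OF fin] by (auto simp: top_def P_def intro!: sum.cong)
  finally show ?thesis unfolding top_def .
qed

locale graded_covers =
  fixes P :: "'a \<Rightarrow> bool" and covers :: "'a \<Rightarrow> 'a \<Rightarrow> bool"
  assumes covers_P: "covers a b \<Longrightarrow> P a \<and> P b"
    and finite_lower_covers: "P b \<Longrightarrow> finite {a. covers a b}"
    and finite_upper_covers: "P a \<Longrightarrow> finite {b. covers a b}"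
    and card_common_covers:
      "P a \<Longrightarrow> P b \<Longrightarrow> card {c. covers c a \<and> covers c b} = card {c. covers a c \<and> covers b c}"
begin

definition down :: "('a \<Rightarrow> nat) \<Rightarrow> 'a \<Rightarrow> nat" where
  "down g b = (\<Sum>a | covers a b. g a)"

definition up :: "('a \<Rightarrow> nat) \<Rightarrow> 'a \<Rightarrow> nat" where
  "up g a = (\<Sum>b | covers a b. g b)"

lemma down_cong: "(\<And>a. P a \<Longrightarrow> g a = h a) \<Longrightarrow> down g b = down h b"
  unfolding down_def using covers_P by (auto intro!: sum.cong)

lemma up_cong: "(\<And>b. P b \<Longrightarrow> g b = h b) \<Longrightarrow> up g a = up h a"
  unfolding up_def using covers_P by (auto intro!: sum.cong)

lemma down_up_commute:
  assumes "P a"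
  shows "down (up g) a = up (down g) a"
proof -
  let ?L = "{b. covers b a}" and ?U = "{b. covers a b}"
  let ?W = "(\<Union>b\<in>?L. {c. covers b c}) \<union> (\<Union>b\<in>?U. {c. covers c b})"
  have fin: "finite ?L" "finite ?U" using assms finite_lower_covers finite_upper_covers by blast+
  have "finite ?W"
    using fin covers_P by (blast intro: finite_lower_covers finite_upper_covers)
  note fin = fin this
  have "{c. covers b c} = {c. c \<in> ?W \<and> covers b c}" if "b \<in> ?L" for b using that by blast
  then have "down (up g) a = (\<Sum>b\<in>?L. \<Sum>c | c \<in> ?W \<and> covers b c. g c)"
    unfolding down_def up_def by (intro sum.cong) auto
  also have "\<dots> = (\<Sum>c\<in>?W. \<Sum>b | b \<in> ?L \<and> covers b c. g c)"
    by (rule sum.swap_restrict[OF fin(1,3)])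
  also have "\<dots> = (\<Sum>c\<in>?W. card {b. covers b a \<and> covers b c} * g c)"
    by simp
  also have "\<dots> = (\<Sum>c\<in>?W. card {b. covers a b \<and> covers c b} * g c)"
  proof (rule sum.cong[OF refl])
    fix c assume "c \<in> ?W"
    then have "P c" using covers_P by blast
    then show "card {b. covers b a \<and> covers b c} * g c = card {b. covers a b \<and> covers c b} * g c"
      using card_common_covers[OF assms] by simp
  qed
  also have "\<dots> = (\<Sum>c\<in>?W. \<Sum>b | b \<in> ?U \<and> covers c b. g c)"
    by simp
  also have "\<dots> = (\<Sum>b\<in>?U. \<Sum>c | c \<in> ?W \<and> covers c b. g c)"
    by (rule sum.swap_restrict[OF fin(2,3), symmetric])
  also have "\<dots> = up (down g) a"
  proof -
    have "{c. covers c b} = {c. c \<in> ?W \<and> covers c b}" if "b \<in> ?U" for b using that by blast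
    then show ?thesis unfolding down_def up_def by (intro sum.cong) auto
  qed
  finally show ?thesis .
qed

lemma down_power_up:
  "P a \<Longrightarrow> (down ^^ m) (up g) a = up ((down ^^ m) g) a"
proof (induction m arbitrary: a)
  case (Suc m)
  have "(down ^^ Suc m) (up g) a = down (up ((down ^^ m) g)) a"
    using Suc.IH by (auto intro: down_cong)
  also have "\<dots> = up ((down ^^ Suc m) g) a" using down_up_commute[OF Suc.prems] by simp
  finally show ?case .
qed simp

lemma down_power_cong:
  "(\<And>a. P a \<Longrightarrow> g a = h a) \<Longrightarrow> P b \<Longrightarrow> (down ^^ m) g b = (down ^^ m) h b"
proof (induction m arbitrary: b)
  case (Suc m)
  then show ?case by (auto intro: down_cong)
qed simp

lemma down_power_eq_up_power:
  "P a \<Longrightarrow> (down ^^ m) (\<lambda>_. 1) a = (up ^^ m) (\<lambda>_. 1) a"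
proof (induction m arbitrary: a)
  case (Suc m)
  have "down (\<lambda>_. 1) b = up (\<lambda>_. 1) b" if "P b" for b
    using card_common_covers[OF that that] by (simp add: down_def up_def)
  then have "(down ^^ Suc m) (\<lambda>_. 1) a = (down ^^ m) (up (\<lambda>_. 1)) a"
    unfolding funpow_Suc_right comp_def using Suc.prems by (rule down_power_cong)
  also have "\<dots> = up ((down ^^ m) (\<lambda>_. 1)) a" by (rule down_power_up[OF Suc.prems])
  also have "\<dots> = up ((up ^^ m) (\<lambda>_. 1)) a" by (rule up_cong) (rule Suc.IH)
  finally show ?case by simp
qed simp

lemma down_power_involution:
  assumes inv: "\<And>a. d (d a) = a" and reverses: "\<And>a b. covers (d b) (d a) \<longleftrightarrow> covers a b"
  shows "(down ^^ m) (\<lambda>_. 1) (d a) = (up ^^ m) (\<lambda>_. 1) a"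
proof (induction m arbitrary: a)
  case (Suc m)
  have "{b. covers b (d a)} = d ` {c. covers a c}"
  proof (rule set_eqI)
    fix b
    have "b \<in> d ` {c. covers a c} \<longleftrightarrow> d b \<in> {c. covers a c}"
      by (metis (no_types, lifting) image_iff inv)
    then show "b \<in> {b. covers b (d a)} \<longleftrightarrow> b \<in> d ` {c. covers a c}" by (metis inv mem_Collect_eq reverses)
  qed
  moreover have "inj d" by (metis inv injI)
  ultimately have "(down ^^ Suc m) (\<lambda>_. 1) (d a) = (\<Sum>c | covers a c. (down ^^ m) (\<lambda>_. 1) (d c))"
    by (simp add: down_def sum.reindex inj_on_subset[OF \<open>inj d\<close>])
  also have "\<dots> = up ((up ^^ m) (\<lambda>_. 1)) a"
    using Suc.IH by (simp only: up_def[of "(up ^^ m) (\<lambda>_. 1)" a])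
  finally show ?case by simp
qed simp

end

lemma cylindric_antimono: "cylindric k n lam \<Longrightarrow> a \<le> b \<Longrightarrow> lam b \<le> lam a"
  unfolding cylindric_def by blast

lemma cylindric_periodic: "cylindric k n lam \<Longrightarrow> lam x = lam (x + int k) + (int n - int k)"
  unfolding cylindric_def by blast

lemma cylindric_shift:
  assumes "cylindric k n lam"
  shows "lam (x - t * int k) = lam x + t * (int n - int k)"
proof (induction t rule: int_induct[where k = 0])
  case (step1 t)
  have "lam (x - (t + 1) * int k) = lam (x - t * int k) + (int n - int k)"
    using cylindric_periodic[OF assms, of "x - (t + 1) * int k"] by (simp add: algebra_simps)
  with step1 show ?case by (simp add: algebra_simps)
next
  case (step2 t)
  have "lam (x - t * int k) = lam (x - (t - 1) * int k) + (int n - int k)"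
    using cylindric_periodic[OF assms, of "x - t * int k"] by (simp add: algebra_simps)
  with step2 show ?case by (simp add: algebra_simps)
qed simp

lemma cylindric_shift_mod:
  assumes "cylindric k n lam"
  shows "lam (x mod int k + c) = lam (x + c) + (x div int k) * (int n - int k)"
proof -
  have "x mod int k + c = x + c - (x div int k) * int k" by (simp add: minus_div_mult_eq_mod[symmetric])
  then show ?thesis by (simp only:) (rule cylindric_shift[OF assms])
qed

lemma mod_eq_imp_shift: "z mod int k = x mod int k \<Longrightarrow> \<exists>t. z = x - t * int k"
  by (metis add.commute diff_add_cancel minus_mult_div_eq_mod mult.commute mod_eq_dvd_iff dvd_def
      diff_diff_eq2 mult_minus_right uminus_add_conv_diff)

lemma mod_shift [simp]: "(x - t * int k) mod int k = x mod int k"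
  by (simp add: mod_eq_dvd_iff)

lemma k_eq_1_if_mod_succ_eq: "(x + 1) mod int k = x mod int k \<Longrightarrow> k = 1"
  using mod_eq_dvd_iff[of "x + 1" "int k" x] by simp

lemma mem_box_of: "q \<in> box_of k n p \<longleftrightarrow> (\<exists>t. q = (fst p - t * int k, snd p + t * (int n - int k)))"
  unfolding box_of_def by auto

lemma box_of_self: "p \<in> box_of k n p"
  unfolding mem_box_of by (rule exI[of _ 0]) simp

lemma box_of_eq_iff: "box_of k n p = box_of k n q \<longleftrightarrow> q \<in> box_of k n p"
proof
  assume "q \<in> box_of k n p"
  then obtain t where t: "q = (fst p - t * int k, snd p + t * (int n - int k))" unfolding mem_box_of by blast
  show "box_of k n p = box_of k n q"
  proof (rule set_eqI)
    fix r
    show "r \<in> box_of k n p \<longleftrightarrow> r \<in> box_of k n q"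
      unfolding mem_box_of t
    proof (simp, intro iffI; elim exE)
      fix s assume "r = (fst p - s * int k, snd p + s * (int n - int k))"
      then show "\<exists>u. r = (fst p - t * int k - u * int k, snd p + t * (int n - int k) + u * (int n - int k))"
        by (intro exI[of _ "s - t"]) (simp add: algebra_simps)
    next
      fix u assume "r = (fst p - t * int k - u * int k, snd p + t * (int n - int k) + u * (int n - int k))"
      then show "\<exists>s. r = (fst p - s * int k, snd p + s * (int n - int k))"
        by (intro exI[of _ "t + u"]) (simp add: algebra_simps)
    qed
  qed
qed (use box_of_self in simp)

lemma in_part_box_of:
  assumes "cylindric k n lam" "q \<in> box_of k n p"
  shows "in_part lam q \<longleftrightarrow> in_part lam p"
  using assms(2) cylindric_shift[OF assms(1)] unfolding mem_box_of in_part_def by auto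

lemma skew_boxesE:
  assumes "b \<in> skew_boxes k n lam mu"
  obtains p where "b = box_of k n p" "in_part lam p" "\<not> in_part mu p"
  using assms unfolding skew_boxes_def by blast

lemma box_of_mem_skew_boxes:
  assumes "cylindric k n lam" "cylindric k n mu"
  shows "box_of k n p \<in> skew_boxes k n lam mu \<longleftrightarrow> in_part lam p \<and> \<not> in_part mu p"
proof
  assume "box_of k n p \<in> skew_boxes k n lam mu"
  then obtain q where q: "box_of k n p = box_of k n q" "in_part lam q" "\<not> in_part mu q"
    by (rule skew_boxesE)
  then have "p \<in> box_of k n q" by (metis box_of_self)
  then show "in_part lam p \<and> \<not> in_part mu p" using in_part_box_of assms q by blast
qed (unfold skew_boxes_def, blast)

text \<open>Rotation by 180 degrees, sending the point (x, y) to (-x, 1 - y); it reverses inclusion.\<close>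

definition dual_part :: "(int \<Rightarrow> int) \<Rightarrow> int \<Rightarrow> int" where
  "dual_part lam x = - lam (- x)"

definition dual_point :: "int \<times> int \<Rightarrow> int \<times> int" where
  "dual_point p = (- fst p, 1 - snd p)"

definition dual_box :: "(int \<times> int) set \<Rightarrow> (int \<times> int) set" where
  "dual_box b = dual_point ` b"

lemma dual_part_dual_part [simp]: "dual_part (dual_part lam) = lam"
  by (rule ext) (simp add: dual_part_def)

lemma dual_point_dual_point [simp]: "dual_point (dual_point p) = p"
  by (simp add: dual_point_def)

lemma dual_box_dual_box [simp]: "dual_box (dual_box b) = b"
  by (simp add: dual_box_def image_comp comp_def)

lemma dual_part_eq_iff [simp]: "dual_part a = dual_part b \<longleftrightarrow> a = b"
  by (metis dual_part_dual_part)

lemma cylindric_dual_part: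
  assumes "cylindric k n lam"
  shows "cylindric k n (dual_part lam)"
  unfolding cylindric_def dual_part_def
proof (intro conjI allI impI)
  fix a b :: int assume "a \<le> b"
  then have "- b \<le> - a" by simp
  then have "lam (- a) \<le> lam (- b)" using assms unfolding cylindric_def by blast
  then show "- lam (- b) \<le> - lam (- a)" by simp
next
  fix m
  have "lam (- m - int k) = lam (- m) + (int n - int k)"
    using assms unfolding cylindric_def by (metis diff_add_cancel)
  then show "- lam (- m) = - lam (- (m + int k)) + (int n - int k)" by simp
qed

lemma cylindric_dual_part_iff [simp]: "cylindric k n (dual_part lam) \<longleftrightarrow> cylindric k n lam"
  by (metis cylindric_dual_part dual_part_dual_part)

lemma subpart_dual_part_iff: "subpart (dual_part a) (dual_part b) \<longleftrightarrow> subpart b a"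
  unfolding subpart_def dual_part_def by (metis minus_minus neg_le_iff_le)

lemma dual_part_inf: "dual_part (inf a b) = sup (dual_part a) (dual_part b)"
  by (auto simp: dual_part_def fun_eq_iff inf_min sup_max)

lemma dual_part_sup: "dual_part (sup a b) = inf (dual_part a) (dual_part b)"
  by (auto simp: dual_part_def fun_eq_iff inf_min sup_max)

lemma in_part_dual_part: "in_part (dual_part lam) p \<longleftrightarrow> \<not> in_part lam (dual_point p)"
  by (auto simp: in_part_def dual_part_def dual_point_def)

lemma box_of_dual_point: "box_of k n (dual_point p) = dual_box (box_of k n p)"
proof (rule set_eqI, rule iffI)
  fix q assume "q \<in> box_of k n (dual_point p)"
  then obtain t where "q = (- fst p - t * int k, 1 - snd p + t * (int n - int k))"
    unfolding box_of_def dual_point_def by auto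
  then have "dual_point q = (fst p - (- t) * int k, snd p + (- t) * (int n - int k))"
    by (simp add: dual_point_def)
  then have "dual_point q \<in> box_of k n p" unfolding box_of_def by blast
  then show "q \<in> dual_box (box_of k n p)" unfolding dual_box_def by (metis dual_point_dual_point imageI)
next
  fix q assume "q \<in> dual_box (box_of k n p)"
  then obtain t where "q = dual_point (fst p - t * int k, snd p + t * (int n - int k))"
    unfolding box_of_def dual_box_def by auto
  then have "q = (fst (dual_point p) - (- t) * int k, snd (dual_point p) + (- t) * (int n - int k))"
    by (simp add: dual_point_def algebra_simps)
  then show "q \<in> box_of k n (dual_point p)" unfolding box_of_def by blast
qed

lemma skew_boxes_dual_part:
  "skew_boxes k n (dual_part mu) (dual_part lam) = dual_box ` skew_boxes k n lam mu"
proof (rule set_eqI, rule iffI)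
  fix b assume "b \<in> skew_boxes k n (dual_part mu) (dual_part lam)"
  then obtain q where q: "b = box_of k n q" "in_part lam (dual_point q)" "\<not> in_part mu (dual_point q)"
    unfolding skew_boxes_def in_part_dual_part by blast
  then have "box_of k n (dual_point q) \<in> skew_boxes k n lam mu" unfolding skew_boxes_def by blast
  moreover have "b = dual_box (box_of k n (dual_point q))"
    using box_of_dual_point[of k n "dual_point q"] q(1) by simp
  ultimately show "b \<in> dual_box ` skew_boxes k n lam mu" by blast
next
  fix b assume "b \<in> dual_box ` skew_boxes k n lam mu"
  then obtain p where "b = box_of k n (dual_point p)" "in_part lam p" "\<not> in_part mu p"
    unfolding skew_boxes_def box_of_dual_point by blast
  then have "b = box_of k n (dual_point p) \<and> in_part (dual_part mu) (dual_point p) \<and>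
      \<not> in_part (dual_part lam) (dual_point p)" by (simp add: in_part_dual_part)
  then show "b \<in> skew_boxes k n (dual_part mu) (dual_part lam)"
    unfolding skew_boxes_def by blast
qed

lemma card_skew_boxes_dual_part:
  "card (skew_boxes k n (dual_part mu) (dual_part lam)) = card (skew_boxes k n lam mu)"
  unfolding skew_boxes_dual_part by (rule card_image) (metis dual_box_dual_box inj_onI)

lemma skew_boxes_self [simp]: "skew_boxes k n lam lam = {}"
  by (simp add: skew_boxes_def)

lemma subpart_trans: "subpart a b \<Longrightarrow> subpart b c \<Longrightarrow> subpart a c"
  unfolding subpart_def by (metis order_trans)

lemma in_part_subpart: "subpart mu lam \<Longrightarrow> in_part mu p \<Longrightarrow> in_part lam p"
  unfolding subpart_def in_part_def by (metis order_trans)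

locale cylinder =
  fixes k n :: nat
  assumes k_pos: "1 \<le> k" and k_less_n: "k < n"
begin

lemma cylindric_eqI:
  assumes "cylindric k n a" "cylindric k n b" "\<And>x. 0 \<le> x \<Longrightarrow> x < int k \<Longrightarrow> a x = b x"
  shows "a = b"
proof
  fix x
  have "a (x mod int k) = b (x mod int k)" using assms(3) k_pos by simp
  then show "a x = b x"
    using cylindric_shift_mod[OF assms(1), of x 0] cylindric_shift_mod[OF assms(2), of x 0] by simp
qed

lemma box_of_eq_same_column:
  assumes "box_of k n p = box_of k n q" "fst p = fst q" shows "p = q"
proof -
  obtain t where t: "q = (fst p - t * int k, snd p + t * (int n - int k))"
    using assms(1) unfolding box_of_eq_iff mem_box_of by blast
  then show ?thesis using assms(2) k_pos by (cases p) auto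
qed

lemma box_of_eq_same_row:
  assumes "box_of k n p = box_of k n q" "snd p = snd q" shows "p = q"
proof -
  obtain t where t: "q = (fst p - t * int k, snd p + t * (int n - int k))"
    using assms(1) unfolding box_of_eq_iff mem_box_of by blast
  then show ?thesis using assms(2) k_less_n by (cases p) auto
qed

lemma skew_boxes_eq_image:
  assumes "cylindric k n lam" "cylindric k n mu"
  shows "skew_boxes k n lam mu = box_of k n ` Sigma {0..<int k} (\<lambda>x. {mu x<..lam x})"
proof
  show "skew_boxes k n lam mu \<subseteq> box_of k n ` Sigma {0..<int k} (\<lambda>x. {mu x<..lam x})"
  proof
    fix b assume "b \<in> skew_boxes k n lam mu"
    then obtain p where p: "b = box_of k n p" "in_part lam p" "\<not> in_part mu p" by (rule skew_boxesE)
    define q where "q = (fst p mod int k, snd p + (fst p div int k) * (int n - int k))"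
    have "q \<in> box_of k n p"
      unfolding q_def mem_box_of by (auto simp: minus_div_mult_eq_mod[symmetric])
    then have "b = box_of k n q" "in_part lam q" "\<not> in_part mu q"
      using p box_of_eq_iff in_part_box_of assms by blast+
    moreover have "0 \<le> fst q" "fst q < int k" using k_pos by (auto simp: q_def)
    ultimately show "b \<in> box_of k n ` Sigma {0..<int k} (\<lambda>x. {mu x<..lam x})"
      unfolding in_part_def by (cases q) auto
  qed
qed (force simp: skew_boxes_def in_part_def)

lemma box_of_inj_on: "inj_on (box_of k n) (Sigma {0..<int k} A)"
proof (rule inj_onI)
  fix p q assume p: "p \<in> Sigma {0..<int k} A" and q: "q \<in> Sigma {0..<int k} A"
    and "box_of k n p = box_of k n q"
  then obtain t where t: "q = (fst p - t * int k, snd p + t * (int n - int k))"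
    unfolding box_of_eq_iff mem_box_of by blast
  have "0 \<le> fst p" "fst p < int k" "0 \<le> fst q" "fst q < int k" "fst q = fst p - t * int k"
    using p q t by auto
  then have "t * int k < int k" "- int k < t * int k" by linarith+
  moreover have "int k \<le> t * int k" if "1 \<le> t" using mult_right_mono[OF that, of "int k"] by simp
  moreover have "t * int k \<le> - int k" if "t \<le> -1" using mult_right_mono[OF that, of "int k"] by simp
  ultimately have "t = 0" by linarith
  then show "p = q" using t by simp
qed

lemma card_skew_boxes:
  assumes "cylindric k n lam" "cylindric k n mu"
  shows "card (skew_boxes k n lam mu) = (\<Sum>x\<in>{0..<int k}. nat (lam x - mu x))"
  unfolding skew_boxes_eq_image[OF assms] card_image[OF box_of_inj_on] by simp

lemma finite_skew_boxes:
  "cylindric k n lam \<Longrightarrow> cylindric k n mu \<Longrightarrow> finite (skew_boxes k n lam mu)"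
  by (simp add: skew_boxes_eq_image)

definition covers :: "(int \<Rightarrow> int) \<Rightarrow> (int \<Rightarrow> int) \<Rightarrow> bool" where
  "covers mu lam \<longleftrightarrow> cylindric k n mu \<and> cylindric k n lam \<and> subpart mu lam \<and>
     card (skew_boxes k n lam mu) = 1"

lemma covers_dual_part_iff: "covers (dual_part lam) (dual_part mu) \<longleftrightarrow> covers mu lam"
  unfolding covers_def card_skew_boxes_dual_part subpart_dual_part_iff by auto

lemma card_skew_boxes_add:
  assumes "cylindric k n mu" "cylindric k n sg" "cylindric k n lam" "subpart mu sg" "subpart sg lam"
  shows "card (skew_boxes k n lam mu) = card (skew_boxes k n lam sg) + card (skew_boxes k n sg mu)"
proof -
  have "nat (lam x - mu x) = nat (lam x - sg x) + nat (sg x - mu x)" for x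
    using assms(4,5) nat_add_distrib[of "lam x - sg x" "sg x - mu x"] unfolding subpart_def by simp
  then show ?thesis using assms(1-3) by (simp add: card_skew_boxes sum.distrib)
qed

lemma eq_if_card_skew_boxes_eq_0:
  assumes "cylindric k n mu" "cylindric k n lam" "subpart mu lam" "card (skew_boxes k n lam mu) = 0"
  shows "lam = mu"
proof (rule cylindric_eqI[OF assms(2,1)])
  fix x assume "0 \<le> x" "x < int k"
  then have "nat (lam x - mu x) = 0" using assms(4) by (simp add: card_skew_boxes[OF assms(2,1)])
  moreover have "mu x \<le> lam x" using assms(3) unfolding subpart_def by blast
  ultimately show "lam x = mu x" by simp
qed

lemma cylindric_inf:
  assumes "cylindric k n a" "cylindric k n b"
  shows "cylindric k n (inf a b)"
  unfolding cylindric_def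
proof (intro conjI allI impI)
  fix x y :: int assume "x \<le> y"
  then show "inf a b y \<le> inf a b x" using assms by (auto simp: le_infI1 le_infI2 cylindric_antimono)
next
  fix m
  show "inf a b m = inf a b (m + int k) + (int n - int k)"
    using cylindric_periodic[OF assms(1), of m] cylindric_periodic[OF assms(2), of m]
    by (simp add: inf_min min_def)
qed

lemma cylindric_sup:
  "cylindric k n a \<Longrightarrow> cylindric k n b \<Longrightarrow> cylindric k n (sup a b)"
  by (metis cylindric_dual_part cylindric_inf dual_part_dual_part dual_part_inf)

lemma card_skew_boxes_sup_inf:
  assumes "cylindric k n mu" "cylindric k n a" "cylindric k n b" "subpart mu a" "subpart mu b"
  shows "card (skew_boxes k n (sup a b) mu) + card (skew_boxes k n (inf a b) mu)
       = card (skew_boxes k n a mu) + card (skew_boxes k n b mu)"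
proof -
  have "nat (sup a b x - mu x) + nat (inf a b x - mu x) = nat (a x - mu x) + nat (b x - mu x)" for x
    using assms(4,5) unfolding subpart_def by (simp add: inf_min sup_max max_def min_def)
  then show ?thesis using assms(1-3) cylindric_sup[OF assms(2,3)] cylindric_inf[OF assms(2,3)]
    by (simp add: card_skew_boxes sum.distrib[symmetric])
qed

lemma common_lower_cover_eq_inf:
  assumes "covers c a" "covers c b" "a \<noteq> b"
  shows "c = inf a b"
proof -
  have c: "cylindric k n c" "cylindric k n a" "cylindric k n b" "subpart c a" "subpart c b"
    "card (skew_boxes k n a c) = 1" "card (skew_boxes k n b c) = 1"
    using assms unfolding covers_def by auto
  have ci: "cylindric k n (inf a b)" using cylindric_inf c by blast
  have s: "subpart c (inf a b)" "subpart (inf a b) a" "subpart (inf a b) b"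
    using c unfolding subpart_def by auto
  have "card (skew_boxes k n a c) = card (skew_boxes k n a (inf a b)) + card (skew_boxes k n (inf a b) c)"
    "card (skew_boxes k n b c) = card (skew_boxes k n b (inf a b)) + card (skew_boxes k n (inf a b) c)"
    using card_skew_boxes_add c ci s by blast+
  note sums = this
  have "card (skew_boxes k n (inf a b) c) = 0"
  proof (rule ccontr)
    assume "card (skew_boxes k n (inf a b) c) \<noteq> 0"
    then have "card (skew_boxes k n a (inf a b)) = 0" "card (skew_boxes k n b (inf a b)) = 0"
      using sums c(6,7) by simp_all
    then have "a = inf a b" "b = inf a b" using eq_if_card_skew_boxes_eq_0 ci c(2,3) s(2,3) by blast+
    then show False using assms(3) by simp
  qed
  then show ?thesis using eq_if_card_skew_boxes_eq_0 c(1) ci s(1) by metis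
qed

lemma covers_sup_of_common_lower_cover:
  assumes "covers c a" "covers c b" "a \<noteq> b"
  shows "covers a (sup a b)"
proof -
  have c: "cylindric k n c" "cylindric k n a" "cylindric k n b" "subpart c a" "subpart c b"
    "card (skew_boxes k n a c) = 1" "card (skew_boxes k n b c) = 1"
    using assms unfolding covers_def by auto
  have cs: "cylindric k n (sup a b)" using cylindric_sup c by blast
  have "c = inf a b" by (rule common_lower_cover_eq_inf[OF assms])
  then have "card (skew_boxes k n (sup a b) c) = 2"
    using card_skew_boxes_sup_inf[OF c(1-5)] c(6,7) by simp
  moreover have "subpart a (sup a b)" by (simp add: subpart_def)
  moreover have "card (skew_boxes k n (sup a b) c) = card (skew_boxes k n (sup a b) a) + 1"
    using card_skew_boxes_add[OF c(1,2) cs c(4)] c(6) \<open>subpart a (sup a b)\<close> by simp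
  ultimately show ?thesis unfolding covers_def using c(2) cs by simp
qed

lemma common_upper_cover_eq_sup:
  assumes "covers a d" "covers b d" "a \<noteq> b"
  shows "d = sup a b"
proof -
  have "dual_part d = inf (dual_part a) (dual_part b)"
    using assms by (intro common_lower_cover_eq_inf) (auto simp: covers_dual_part_iff)
  then show ?thesis by (metis dual_part_dual_part dual_part_inf)
qed

lemma covers_inf_of_common_upper_cover:
  assumes "covers a d" "covers b d" "a \<noteq> b"
  shows "covers (inf a b) a"
proof -
  have "covers (dual_part a) (sup (dual_part a) (dual_part b))"
    using assms by (intro covers_sup_of_common_lower_cover[where c = "dual_part d"])
      (auto simp: covers_dual_part_iff)
  then show ?thesis by (metis covers_dual_part_iff dual_part_dual_part dual_part_sup)
qed

lemma card_common_covers_of_neq: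
  assumes "a \<noteq> b"
  shows "card {c. covers c a \<and> covers c b} = card {d. covers a d \<and> covers b d}"
proof (cases "\<exists>c. covers c a \<and> covers c b")
  case True
  then obtain c where "covers c a" "covers c b" by blast
  then have "covers a (sup a b)" "covers b (sup a b)"
    using covers_sup_of_common_lower_cover[of c a b] covers_sup_of_common_lower_cover[of c b a] assms
    by (simp_all add: sup_commute)
  then have "{d. covers a d \<and> covers b d} = {sup a b}"
    using common_upper_cover_eq_sup assms by blast
  moreover have "{c. covers c a \<and> covers c b} = {inf a b}"
    using common_lower_cover_eq_inf assms True by blast
  ultimately show ?thesis by simp
next
  case False
  have "\<not> (covers a d \<and> covers b d)" for d
    using covers_inf_of_common_upper_cover assms False by (metis inf_commute)
  then have "{d. covers a d \<and> covers b d} = {}" "{c. covers c a \<and> covers c b} = {}"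
    using False by auto
  then show ?thesis by (simp only: card.empty)
qed

text \<open>Removes the box (x, nu x) at the end of row x, i.e. lowers every row congruent to x modulo k.\<close>

definition remove_corner :: "(int \<Rightarrow> int) \<Rightarrow> int \<Rightarrow> int \<Rightarrow> int" where
  "remove_corner nu x = (\<lambda>z. if z mod int k = x mod int k then nu z - 1 else nu z)"

definition corners :: "(int \<Rightarrow> int) \<Rightarrow> int set" where
  "corners nu = {r \<in> {0..<int k}. nu (r + 1) < nu r}"

lemma cylindric_remove_corner:
  assumes c: "cylindric k n nu" and corner: "nu (x + 1) < nu x"
  shows "cylindric k n (remove_corner nu x)"
  unfolding cylindric_def
proof (intro conjI allI impI)
  fix a b :: int assume ab: "a \<le> b"
  show "remove_corner nu x b \<le> remove_corner nu x a"
  proof (cases "a mod int k = x mod int k \<and> b mod int k \<noteq> x mod int k")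
    case True
    then obtain t where t: "a = x - t * int k" using mod_eq_imp_shift by blast
    then have "a + 1 \<le> b" using ab True by (cases "a = b") auto
    then have "nu b \<le> nu (x + 1 - t * int k)" using cylindric_antimono[OF c] t by simp
    also have "\<dots> < nu a" using corner cylindric_shift[OF c] t by simp
    finally show ?thesis using True unfolding remove_corner_def by simp
  next
    case False
    then show ?thesis using cylindric_antimono[OF c ab] unfolding remove_corner_def by auto
  qed
next
  fix m
  show "remove_corner nu x m = remove_corner nu x (m + int k) + (int n - int k)"
    using cylindric_periodic[OF c, of m] unfolding remove_corner_def by simp
qed

lemma skew_boxes_remove_corner:
  assumes c: "cylindric k n nu" and corner: "nu (x + 1) < nu x"
  shows "skew_boxes k n nu (remove_corner nu x) = {box_of k n (x, nu x)}"
proof (rule set_eqI, rule iffI)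
  fix b assume "b \<in> skew_boxes k n nu (remove_corner nu x)"
  then obtain p where p: "b = box_of k n p" "in_part nu p" "\<not> in_part (remove_corner nu x) p"
    by (rule skew_boxesE)
  then have "fst p mod int k = x mod int k" and y: "snd p = nu (fst p)"
    unfolding in_part_def remove_corner_def by (auto split: if_splits)
  then obtain t where t: "fst p = x - t * int k" using mod_eq_imp_shift by blast
  then have "p \<in> box_of k n (x, nu x)"
    unfolding mem_box_of using y cylindric_shift[OF c, of x t] by (auto simp: prod_eq_iff)
  then show "b \<in> {box_of k n (x, nu x)}" using p(1) box_of_eq_iff[of k n "(x, nu x)" p] by simp
next
  fix b assume "b \<in> {box_of k n (x, nu x)}"
  then show "b \<in> skew_boxes k n nu (remove_corner nu x)"
    using box_of_mem_skew_boxes[OF c cylindric_remove_corner[OF assms]]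
    unfolding in_part_def remove_corner_def by simp
qed

lemma covers_remove_corner:
  "cylindric k n nu \<Longrightarrow> nu (x + 1) < nu x \<Longrightarrow> covers (remove_corner nu x) nu"
  unfolding covers_def using cylindric_remove_corner skew_boxes_remove_corner
  by (simp add: subpart_def remove_corner_def)

lemma eq_remove_corner_if_single_box:
  assumes c: "cylindric k n nu" "cylindric k n mu" "subpart mu nu"
    and b: "skew_boxes k n nu mu = {box_of k n (x, y)}"
  shows "mu = remove_corner nu x"
proof
  have in_b: "box_of k n q = box_of k n (x, y)" if "in_part nu q" "\<not> in_part mu q" for q
    using box_of_mem_skew_boxes[OF c(1,2)] b that by blast
  have p: "in_part nu (x, y)" "\<not> in_part mu (x, y)" using b box_of_mem_skew_boxes[OF c(1,2)] by auto
  fix z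
  show "mu z = remove_corner nu x z"
  proof (cases "z mod int k = x mod int k")
    case True
    obtain t where t: "z = x - t * int k" using mod_eq_imp_shift[OF True] by blast
    define q where "q = (z, y + t * (int n - int k))"
    have "q \<in> box_of k n (x, y)" unfolding q_def mem_box_of t by auto
    then have q: "in_part nu q" "\<not> in_part mu q" "box_of k n q = box_of k n (x, y)"
      using p in_part_box_of c box_of_eq_iff by blast+
    have uniq: "(z, w) = q" if "w \<le> nu z" "mu z < w" for w
      using in_b[of "(z, w)"] that q(3) by (intro box_of_eq_same_column) (auto simp: q_def in_part_def)
    have "mu z < snd q" "snd q \<le> nu z" using q(1,2) by (auto simp: q_def in_part_def)
    then have nz: "nu z = snd q" using uniq[of "nu z"] by auto
    have "\<not> mu z < nu z - 1"
    proof
      assume "mu z < nu z - 1"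
      then have "(z, nu z - 1) = q" by (intro uniq) simp_all
      then have "nu z - 1 = snd q" by (metis snd_conv)
      with nz show False by simp
    qed
    then show ?thesis using True \<open>mu z < snd q\<close> nz unfolding remove_corner_def by simp
  next
    case False
    have "\<not> mu z < nu z"
    proof
      assume "mu z < nu z"
      then have "box_of k n (z, nu z) = box_of k n (x, y)" using in_b by (simp add: in_part_def)
      then obtain t where "z = x - t * int k"
        using box_of_eq_iff[of k n "(x, y)" "(z, nu z)"] unfolding mem_box_of by auto
      then show False using False by simp
    qed
    then show ?thesis using False c(3) unfolding remove_corner_def subpart_def
      by (simp add: not_less order_antisym)
  qed
qed

lemma covers_imp_remove_corner:
  assumes "covers mu nu"
  obtains x where "mu = remove_corner nu x" "nu (x + 1) < nu x"
proof -
  have c: "cylindric k n nu" "cylindric k n mu" "subpart mu nu" "card (skew_boxes k n nu mu) = 1"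
    using assms unfolding covers_def by auto
  obtain b where b: "skew_boxes k n nu mu = {b}" using c(4) card_1_singletonE by blast
  then obtain x y where "b = box_of k n (x, y)" by (metis insertI1 skew_boxesE surj_pair)
  then have eq: "mu = remove_corner nu x" using eq_remove_corner_if_single_box c(1-3) b by blast
  moreover have "nu (x + 1) < nu x"
  proof (cases "(x + 1) mod int k = x mod int k")
    case True
    then have "k = 1" by (rule k_eq_1_if_mod_succ_eq)
    then show ?thesis using cylindric_periodic[OF c(1), of x] k_less_n by simp
  next
    case False
    then show ?thesis using cylindric_antimono[OF c(2), of x "x + 1"]
      unfolding eq remove_corner_def by simp
  qed
  ultimately show ?thesis by (rule that)
qed

lemma corner_mod_iff:
  "cylindric k n nu \<Longrightarrow> x mod int k \<in> corners nu \<longleftrightarrow> nu (x + 1) < nu x"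
  using cylindric_shift_mod[of k n nu x 1] cylindric_shift_mod[of k n nu x 0] k_pos
  by (simp add: corners_def)

lemma lower_covers_eq_image:
  assumes "cylindric k n nu"
  shows "{mu. covers mu nu} = remove_corner nu ` corners nu"
proof (rule set_eqI, rule iffI)
  fix mu assume "mu \<in> {mu. covers mu nu}"
  then obtain x where x: "mu = remove_corner nu x" "nu (x + 1) < nu x"
    using covers_imp_remove_corner by blast
  have "remove_corner nu x = remove_corner nu (x mod int k)" unfolding remove_corner_def by simp
  then show "mu \<in> remove_corner nu ` corners nu" using x corner_mod_iff[OF assms] by blast
qed (auto simp: corners_def covers_remove_corner[OF assms])

lemma inj_on_remove_corner: "inj_on (remove_corner nu) {0..<int k}"
proof (rule inj_onI)
  fix r s assume rs: "r \<in> {0..<int k}" "s \<in> {0..<int k}" "remove_corner nu r = remove_corner nu s"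
  then have "remove_corner nu r r = remove_corner nu s r" by simp
  then have "r mod int k = s mod int k" unfolding remove_corner_def by (auto split: if_splits)
  then show "r = s" using rs(1,2) by simp
qed

lemma finite_corners: "finite (corners nu)"
  unfolding corners_def by (rule finite_subset[of _ "{0..<int k}"]) auto

lemma card_lower_covers: "cylindric k n nu \<Longrightarrow> card {mu. covers mu nu} = card (corners nu)"
  unfolding lower_covers_eq_image
  by (rule card_image, rule inj_on_subset[OF inj_on_remove_corner]) (auto simp: corners_def)

lemma upper_covers_eq_image: "{lam. covers nu lam} = dual_part ` {mu. covers mu (dual_part nu)}"
proof (rule set_eqI, rule iffI)
  fix lam assume "lam \<in> {lam. covers nu lam}"
  then have "covers (dual_part lam) (dual_part nu)" by (simp add: covers_dual_part_iff)
  then show "lam \<in> dual_part ` {mu. covers mu (dual_part nu)}"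
    by (intro image_eqI[of lam dual_part "dual_part lam"]) simp_all
next
  fix lam assume "lam \<in> dual_part ` {mu. covers mu (dual_part nu)}"
  then obtain mu where "covers mu (dual_part nu)" "lam = dual_part mu" by blast
  then show "lam \<in> {lam. covers nu lam}" using covers_dual_part_iff[of "dual_part mu" nu] by simp
qed

lemma card_corners_dual_part:
  assumes c: "cylindric k n nu"
  shows "card (corners (dual_part nu)) = card (corners nu)"
proof (rule card_eq_by_involution[where f = "\<lambda>r. (- r - 1) mod int k"])
  \<comment> \<open>a corner in row r of the rotated partition is a corner in row -r-1 of nu\<close>
  have range: "corners mu \<subseteq> {0..<int k}" for mu by (auto simp: corners_def)
  have inv: "(- ((- r - 1) mod int k) - 1) mod int k = r" if "r \<in> {0..<int k}" for r
  proof -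
    have "(- ((- r - 1) mod int k) - 1) mod int k = (- (- r - 1) - 1) mod int k"
      by (metis mod_diff_left_eq mod_minus_eq)
    then show ?thesis using that by simp
  qed
  have reflect: "(- r - 1) mod int k \<in> corners nu \<longleftrightarrow> r \<in> corners (dual_part nu)"
    if "r \<in> {0..<int k}" for r
  proof -
    have "r \<in> corners (dual_part nu) \<longleftrightarrow> nu (- r) < nu (- r - 1)"
      using that by (auto simp: corners_def dual_part_def)
    then show ?thesis using corner_mod_iff[OF c, of "- r - 1"] by simp
  qed
  show "(\<lambda>r. (- r - 1) mod int k) ` corners (dual_part nu) \<subseteq> corners nu"
    using reflect range by blast
  have "(- r - 1) mod int k \<in> {0..<int k}" for r using k_pos by simp
  then show "(\<lambda>r. (- r - 1) mod int k) ` corners nu \<subseteq> corners (dual_part nu)"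
    using reflect inv range by (metis (no_types, lifting) image_subsetI subsetD)
  show "(- ((- r - 1) mod int k) - 1) mod int k = r" if "r \<in> corners nu" for r
    using inv range that by blast
  show "(- ((- r - 1) mod int k) - 1) mod int k = r" if "r \<in> corners (dual_part nu)" for r
    using inv range that by blast
qed

lemma card_common_covers:
  assumes "cylindric k n a" "cylindric k n b"
  shows "card {c. covers c a \<and> covers c b} = card {d. covers a d \<and> covers b d}"
proof (cases "a = b")
  case True
  have "card {d. covers a d} = card {mu. covers mu (dual_part a)}"
    unfolding upper_covers_eq_image by (rule card_image) (simp add: inj_on_def)
  then show ?thesis using True assms card_lower_covers card_corners_dual_part cylindric_dual_part by simp
qed (rule card_common_covers_of_neq)

sublocale graded_covers "cylindric k n" covers
proof
  show "covers a b \<Longrightarrow> cylindric k n a \<and> cylindric k n b" for a b by (simp add: covers_def)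
  show "cylindric k n b \<Longrightarrow> finite {a. covers a b}" for b
    by (simp add: lower_covers_eq_image finite_corners)
  show "cylindric k n a \<Longrightarrow> finite {b. covers a b}" for a
    by (simp add: upper_covers_eq_image lower_covers_eq_image finite_corners)
qed (fact card_common_covers)

definition box_precedes :: "(int \<times> int) set \<Rightarrow> (int \<times> int) set \<Rightarrow> bool" where
  "box_precedes b c \<longleftrightarrow>
     (\<exists>x y1 y2. b = box_of k n (x, y1) \<and> c = box_of k n (x, y2) \<and> y1 < y2) \<or>
     (\<exists>x1 x2 y. b = box_of k n (x1, y) \<and> c = box_of k n (x2, y) \<and> x1 < x2)"

lemma semistandard_imp_strict:
  assumes cl: "cylindric k n lam" and cm: "cylindric k n mu"
    and inj: "inj_on R (skew_boxes k n lam mu)" and ss: "semistandard k n lam mu R"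
    and b: "b \<in> skew_boxes k n lam mu" and c: "c \<in> skew_boxes k n lam mu"
    and "box_precedes b c"
  shows "R b < R c"
  using \<open>box_precedes b c\<close> unfolding box_precedes_def
proof (elim disjE exE conjE)
  fix x y1 y2 assume e: "b = box_of k n (x, y1)" "c = box_of k n (x, y2)" "y1 < y2"
  have "b \<noteq> c"
  proof
    assume "b = c"
    then have "(x, y1) = (x, y2)" using e by (intro box_of_eq_same_column) auto
    then show False using e(3) by simp
  qed
  then have "R b \<noteq> R c" using inj b c by (auto simp: inj_on_def)
  moreover have "R b \<le> R c"
    using ss b c e box_of_mem_skew_boxes[OF cl cm] unfolding semistandard_def by blast
  ultimately show "R b < R c" by simp
next
  fix x1 x2 y assume "b = box_of k n (x1, y)" "c = box_of k n (x2, y)" "x1 < x2"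
  then show "R b < R c"
    using ss b c box_of_mem_skew_boxes[OF cl cm] unfolding semistandard_def by blast
qed

lemma strict_imp_semistandard:
  assumes cl: "cylindric k n lam" and cm: "cylindric k n mu"
    and strict: "\<forall>b\<in>skew_boxes k n lam mu. \<forall>c\<in>skew_boxes k n lam mu. box_precedes b c \<longrightarrow> R b < R c"
  shows "semistandard k n lam mu R"
  unfolding semistandard_def
proof (intro conjI allI impI)
  fix x y1 y2 assume "in_part lam (x, y1) \<and> \<not> in_part mu (x, y1) \<and>
    in_part lam (x, y2) \<and> \<not> in_part mu (x, y2) \<and> y1 < y2"
  moreover have "y1 < y2 \<Longrightarrow> box_precedes (box_of k n (x, y1)) (box_of k n (x, y2))"
    unfolding box_precedes_def by blast
  ultimately show "R (box_of k n (x, y1)) \<le> R (box_of k n (x, y2))"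
    using strict box_of_mem_skew_boxes[OF cl cm] by (meson less_imp_le)
next
  fix x1 x2 y assume "in_part lam (x1, y) \<and> \<not> in_part mu (x1, y) \<and>
    in_part lam (x2, y) \<and> \<not> in_part mu (x2, y) \<and> x1 < x2"
  moreover have "x1 < x2 \<Longrightarrow> box_precedes (box_of k n (x1, y)) (box_of k n (x2, y))"
    unfolding box_precedes_def by blast
  ultimately show "R (box_of k n (x1, y)) < R (box_of k n (x2, y))"
    using strict box_of_mem_skew_boxes[OF cl cm] by meson
qed

lemma standard_tableaux_eq_linear_extensions:
  assumes "cylindric k n lam" "cylindric k n mu"
  shows "standard_tableaux k n lam mu = linear_extensions box_precedes (skew_boxes k n lam mu)"
  using semistandard_imp_strict[OF assms] strict_imp_semistandard[OF assms]
  unfolding standard_tableaux_def linear_extensions_def by (auto simp: bij_betw_def)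

lemma num_standard_eq_card_linear_extensions:
  "cylindric k n lam \<Longrightarrow> cylindric k n mu \<Longrightarrow>
    num_standard k n lam mu = card (linear_extensions box_precedes (skew_boxes k n lam mu))"
  by (simp add: num_standard_def standard_tableaux_eq_linear_extensions)

lemma dual_box_eq_box_of_iff: "dual_box b = box_of k n p \<longleftrightarrow> b = box_of k n (dual_point p)"
  by (metis box_of_dual_point dual_box_dual_box)

lemma box_precedes_dual_box: "box_precedes (dual_box b) (dual_box c) \<longleftrightarrow> box_precedes c b"
proof -
  have col: "(\<exists>x y1 y2. dual_box b = box_of k n (x, y1) \<and> dual_box c = box_of k n (x, y2) \<and> y1 < y2)
      \<longleftrightarrow> (\<exists>x y1 y2. c = box_of k n (x, y1) \<and> b = box_of k n (x, y2) \<and> y1 < y2)" (is "?L \<longleftrightarrow> ?R")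
  proof
    assume ?L
    then obtain x y1 y2 where "b = box_of k n (- x, 1 - y1)" "c = box_of k n (- x, 1 - y2)" "y1 < y2"
      unfolding dual_box_eq_box_of_iff dual_point_def by auto
    then show ?R by (intro exI[of _ "- x"] exI[of _ "1 - y2"] exI[of _ "1 - y1"]) auto
  next
    assume ?R
    then obtain x y1 y2 where "c = box_of k n (x, y1)" "b = box_of k n (x, y2)" "y1 < y2" by blast
    then show ?L unfolding dual_box_eq_box_of_iff dual_point_def
      by (intro exI[of _ "- x"] exI[of _ "1 - y2"] exI[of _ "1 - y1"]) auto
  qed
  have row: "(\<exists>x1 x2 y. dual_box b = box_of k n (x1, y) \<and> dual_box c = box_of k n (x2, y) \<and> x1 < x2)
      \<longleftrightarrow> (\<exists>x1 x2 y. c = box_of k n (x1, y) \<and> b = box_of k n (x2, y) \<and> x1 < x2)" (is "?L \<longleftrightarrow> ?R")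
  proof
    assume ?L
    then obtain x1 x2 y where "b = box_of k n (- x1, 1 - y)" "c = box_of k n (- x2, 1 - y)" "x1 < x2"
      unfolding dual_box_eq_box_of_iff dual_point_def by auto
    then show ?R by (intro exI[of _ "- x2"] exI[of _ "- x1"] exI[of _ "1 - y"]) auto
  next
    assume ?R
    then obtain x1 x2 y where "c = box_of k n (x1, y)" "b = box_of k n (x2, y)" "x1 < x2" by blast
    then show ?L unfolding dual_box_eq_box_of_iff dual_point_def
      by (intro exI[of _ "- x2"] exI[of _ "- x1"] exI[of _ "1 - y"]) auto
  qed
  show ?thesis unfolding box_precedes_def col row by blast
qed

lemma num_standard_dual_part:
  assumes "cylindric k n lam" "cylindric k n mu"
  shows "num_standard k n (dual_part mu) (dual_part lam) = num_standard k n lam mu"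
proof -
  have "num_standard k n (dual_part mu) (dual_part lam)
      = card (linear_extensions box_precedes (dual_box ` skew_boxes k n lam mu))"
    using assms by (simp add: num_standard_eq_card_linear_extensions skew_boxes_dual_part)
  also have "\<dots> = card (linear_extensions (\<lambda>b c. box_precedes (dual_box b) (dual_box c))
                          (skew_boxes k n lam mu))"
    by (rule card_linear_extensions_image_involution) simp
  also have "\<dots> = card (linear_extensions box_precedes (skew_boxes k n lam mu))"
    unfolding box_precedes_dual_box
    by (rule card_linear_extensions_converse[symmetric]) (rule finite_skew_boxes[OF assms])
  also have "\<dots> = num_standard k n lam mu"
    using assms by (simp add: num_standard_eq_card_linear_extensions)
  finally show ?thesis .
qed

lemma skew_boxes_split:
  assumes cm: "cylindric k n mu" and cs: "cylindric k n sg" and cl: "cylindric k n lam"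
    and "subpart mu sg" "subpart sg lam"
  shows "skew_boxes k n lam mu = skew_boxes k n lam sg \<union> skew_boxes k n sg mu"
    "skew_boxes k n lam sg \<inter> skew_boxes k n sg mu = {}"
proof -
  have "in_part lam p \<and> \<not> in_part mu p \<longleftrightarrow>
      (in_part lam p \<and> \<not> in_part sg p) \<or> (in_part sg p \<and> \<not> in_part mu p)" for p
    using in_part_subpart assms(4,5) by blast
  then show "skew_boxes k n lam mu = skew_boxes k n lam sg \<union> skew_boxes k n sg mu"
    unfolding skew_boxes_def by blast
  show "skew_boxes k n lam sg \<inter> skew_boxes k n sg mu = {}"
  proof (rule equals0I)
    fix b assume b: "b \<in> skew_boxes k n lam sg \<inter> skew_boxes k n sg mu"
    then obtain p where "b = box_of k n p" "\<not> in_part sg p" by (blast elim: skew_boxesE)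
    then show False using b box_of_mem_skew_boxes[OF cs cm] by blast
  qed
qed

lemma lower_cover_box_maximal:
  assumes cv: "covers nu' nu" and cm: "cylindric k n mu" and s: "subpart mu nu'"
    and b: "skew_boxes k n nu nu' = {b}" and c: "c \<in> skew_boxes k n nu mu"
  shows "\<not> box_precedes b c"
proof
  have cyl: "cylindric k n nu" "cylindric k n nu'" using cv by (auto simp: covers_def)
  have b_in: "box_of k n p = b \<longleftrightarrow> in_part nu p \<and> \<not> in_part nu' p" for p
    using box_of_mem_skew_boxes[OF cyl] b by blast
  assume "box_precedes b c"
  then show False unfolding box_precedes_def
  proof (elim disjE exE conjE)
    fix x y1 y2 assume q: "b = box_of k n (x, y1)" "c = box_of k n (x, y2)" "y1 < y2"
    then have "\<not> in_part nu' (x, y2)" "in_part nu (x, y2)"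
      using b_in[of "(x, y1)"] c box_of_mem_skew_boxes[OF cyl(1) cm] by (auto simp: in_part_def)
    then have "(x, y1) = (x, y2)" using b_in q(1) by (intro box_of_eq_same_column) auto
    then show False using q(3) by simp
  next
    fix x1 x2 y assume q: "b = box_of k n (x1, y)" "c = box_of k n (x2, y)" "x1 < x2"
    have "nu' x2 \<le> nu' x1" using cylindric_antimono[OF cyl(2)] q(3) by simp
    then have "\<not> in_part nu' (x2, y)" "in_part nu (x2, y)"
      using b_in[of "(x1, y)"] c q box_of_mem_skew_boxes[OF cyl(1) cm] by (auto simp: in_part_def)
    then have "(x1, y) = (x2, y)" using b_in q(1) by (intro box_of_eq_same_row) auto
    then show False using q(3) by simp
  qed
qed

lemma lower_cover_of_maximal_box:
  assumes cl: "cylindric k n nu" and cm: "cylindric k n mu" and s: "subpart mu nu"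
    and b: "b \<in> skew_boxes k n nu mu" and top: "\<forall>c\<in>skew_boxes k n nu mu. \<not> box_precedes b c"
  obtains nu' where "covers nu' nu" "subpart mu nu'" "skew_boxes k n nu nu' = {b}"
proof -
  obtain x y where p: "b = box_of k n (x, y)" "in_part nu (x, y)" "\<not> in_part mu (x, y)"
    using b by (metis skew_boxesE surj_pair)
  have "box_precedes b (box_of k n (x, y + 1))" "box_precedes b (box_of k n (x + 1, y))"
    unfolding box_precedes_def p(1) by force+
  then have "box_of k n (x, y + 1) \<notin> skew_boxes k n nu mu" "box_of k n (x + 1, y) \<notin> skew_boxes k n nu mu"
    using top by blast+
  moreover have "mu (x + 1) \<le> mu x" using cylindric_antimono[OF cm] by simp
  ultimately have y: "y = nu x" "nu (x + 1) < nu x" "mu x < y"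
    using p box_of_mem_skew_boxes[OF cl cm] by (auto simp: in_part_def)
  have "subpart mu (remove_corner nu x)"
    unfolding subpart_def
  proof
    fix z
    show "mu z \<le> remove_corner nu x z"
    proof (cases "z mod int k = x mod int k")
      case True
      then obtain t where "z = x - t * int k" using mod_eq_imp_shift by blast
      then show ?thesis using True y cylindric_shift[OF cm] cylindric_shift[OF cl]
        unfolding remove_corner_def by simp
    qed (use s in \<open>simp add: remove_corner_def subpart_def\<close>)
  qed
  then show ?thesis
    using that covers_remove_corner[OF cl y(2)] skew_boxes_remove_corner[OF cl y(2)] p(1) y(1) by simp
qed

lemma eq_if_skew_boxes_eq:
  assumes "cylindric k n nu" "cylindric k n a" "cylindric k n b" "subpart a nu" "subpart b nu"
    and e: "skew_boxes k n nu a = skew_boxes k n nu b"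
  shows "a = b"
proof
  fix x
  have "\<not> a x < b x" if "cylindric k n a" "cylindric k n b" "subpart b nu"
    "skew_boxes k n nu a = skew_boxes k n nu b" for a b
  proof
    assume "a x < b x"
    moreover have "b x \<le> nu x" using that(3) unfolding subpart_def by blast
    ultimately have "box_of k n (x, b x) \<in> skew_boxes k n nu a"
      using box_of_mem_skew_boxes[OF assms(1) that(1)] by (simp add: in_part_def)
    then show False using box_of_mem_skew_boxes[OF assms(1) that(2)] that(4) by (simp add: in_part_def)
  qed
  then show "a x = b x" using assms by (metis linorder_neqE)
qed

lemma skew_boxes_covers_the_elem:
  assumes "covers nu' nu"
  shows "skew_boxes k n nu nu' = {the_elem (skew_boxes k n nu nu')}"
  using assms unfolding covers_def by (auto simp: card_1_singleton_iff)

lemma skew_boxes_below_lower_cover: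
  assumes cv: "covers nu' nu" and cm: "cylindric k n mu" and s: "subpart mu nu'"
  shows "skew_boxes k n nu' mu = skew_boxes k n nu mu - {the_elem (skew_boxes k n nu nu')}"
    "the_elem (skew_boxes k n nu nu') \<in> skew_boxes k n nu mu"
proof -
  have "cylindric k n nu'" "cylindric k n nu" "subpart nu' nu" using cv by (auto simp: covers_def)
  then show "skew_boxes k n nu' mu = skew_boxes k n nu mu - {the_elem (skew_boxes k n nu nu')}"
    "the_elem (skew_boxes k n nu nu') \<in> skew_boxes k n nu mu"
    using skew_boxes_split[OF cm] skew_boxes_covers_the_elem[OF cv] s by blast+
qed

lemma bij_betw_lower_covers_maximal_boxes:
  assumes cl: "cylindric k n nu" and cm: "cylindric k n mu" and s: "subpart mu nu"
  shows "bij_betw (\<lambda>nu'. the_elem (skew_boxes k n nu nu')) {nu'. covers nu' nu \<and> subpart mu nu'}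
           {b \<in> skew_boxes k n nu mu. \<forall>c\<in>skew_boxes k n nu mu. \<not> box_precedes b c}"
proof (rule bij_betw_imageI)
  show "inj_on (\<lambda>nu'. the_elem (skew_boxes k n nu nu')) {nu'. covers nu' nu \<and> subpart mu nu'}"
  proof (rule inj_onI)
    fix a b assume "a \<in> {nu'. covers nu' nu \<and> subpart mu nu'}" "b \<in> {nu'. covers nu' nu \<and> subpart mu nu'}"
      and "the_elem (skew_boxes k n nu a) = the_elem (skew_boxes k n nu b)"
    then have "covers a nu" "covers b nu" "skew_boxes k n nu a = skew_boxes k n nu b"
      using skew_boxes_covers_the_elem by (metis mem_Collect_eq)+
    then show "a = b" using eq_if_skew_boxes_eq[OF cl] by (simp add: covers_def)
  qed
  show "(\<lambda>nu'. the_elem (skew_boxes k n nu nu')) ` {nu'. covers nu' nu \<and> subpart mu nu'}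
      = {b \<in> skew_boxes k n nu mu. \<forall>c\<in>skew_boxes k n nu mu. \<not> box_precedes b c}"
  proof
    show "(\<lambda>nu'. the_elem (skew_boxes k n nu nu')) ` {nu'. covers nu' nu \<and> subpart mu nu'}
        \<subseteq> {b \<in> skew_boxes k n nu mu. \<forall>c\<in>skew_boxes k n nu mu. \<not> box_precedes b c}"
    proof (rule image_subsetI)
      fix nu' assume "nu' \<in> {nu'. covers nu' nu \<and> subpart mu nu'}"
      then have "covers nu' nu" "subpart mu nu'" by simp_all
      then show "the_elem (skew_boxes k n nu nu')
          \<in> {b \<in> skew_boxes k n nu mu. \<forall>c\<in>skew_boxes k n nu mu. \<not> box_precedes b c}"
        using skew_boxes_below_lower_cover(2)[OF _ cm]
          lower_cover_box_maximal[OF _ cm _ skew_boxes_covers_the_elem] by blast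
    qed
    show "{b \<in> skew_boxes k n nu mu. \<forall>c\<in>skew_boxes k n nu mu. \<not> box_precedes b c}
        \<subseteq> (\<lambda>nu'. the_elem (skew_boxes k n nu nu')) ` {nu'. covers nu' nu \<and> subpart mu nu'}"
    proof
      fix b assume "b \<in> {b \<in> skew_boxes k n nu mu. \<forall>c\<in>skew_boxes k n nu mu. \<not> box_precedes b c}"
      then obtain nu' where "covers nu' nu" "subpart mu nu'" "skew_boxes k n nu nu' = {b}"
        using lower_cover_of_maximal_box[OF cl cm s] by blast
      then show "b \<in> (\<lambda>nu'. the_elem (skew_boxes k n nu nu')) ` {nu'. covers nu' nu \<and> subpart mu nu'}"
        by (intro image_eqI[of b _ nu']) simp_all
    qed
  qed
qed

lemma num_standard_eq_sum_lower_covers: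
  assumes cl: "cylindric k n nu" and cm: "cylindric k n mu" and s: "subpart mu nu"
    and ne: "skew_boxes k n nu mu \<noteq> {}"
  shows "num_standard k n nu mu = (\<Sum>nu' | covers nu' nu \<and> subpart mu nu'. num_standard k n nu' mu)"
proof -
  let ?S = "skew_boxes k n nu mu"
  have "num_standard k n nu mu
      = (\<Sum>b | b \<in> ?S \<and> (\<forall>c\<in>?S. \<not> box_precedes b c). card (linear_extensions box_precedes (?S - {b})))"
    using num_standard_eq_card_linear_extensions[OF cl cm]
      card_linear_extensions_maximal[OF finite_skew_boxes[OF cl cm] ne] by simp
  also have "\<dots> = (\<Sum>nu' | covers nu' nu \<and> subpart mu nu'.
                    card (linear_extensions box_precedes (?S - {the_elem (skew_boxes k n nu nu')})))"
    by (rule sum.reindex_bij_betw[OF bij_betw_lower_covers_maximal_boxes[OF cl cm s], symmetric])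
  also have "\<dots> = (\<Sum>nu' | covers nu' nu \<and> subpart mu nu'. num_standard k n nu' mu)"
  proof (rule sum.cong[OF refl])
    fix nu' assume "nu' \<in> {nu'. covers nu' nu \<and> subpart mu nu'}"
    then have "covers nu' nu" "subpart mu nu'" "cylindric k n nu'" by (simp_all add: covers_def)
    then show "card (linear_extensions box_precedes (?S - {the_elem (skew_boxes k n nu nu')}))
        = num_standard k n nu' mu"
      using skew_boxes_below_lower_cover(1)[OF _ cm] num_standard_eq_card_linear_extensions[OF _ cm]
      by simp
  qed
  finally show ?thesis .
qed

definition lower_shapes :: "nat \<Rightarrow> (int \<Rightarrow> int) \<Rightarrow> (int \<Rightarrow> int) set" where
  "lower_shapes m nu = {mu. cylindric k n mu \<and> subpart mu nu \<and> card (skew_boxes k n nu mu) = m}"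

lemma finite_cylindric_bounded:
  assumes "\<And>x. finite (B x)"
  shows "finite {mu. cylindric k n mu \<and> (\<forall>x\<in>{0..<int k}. mu x \<in> B x)}"
    (is "finite ?M")
proof -
  let ?restrict = "\<lambda>mu x. if x \<in> {0..<int k} then mu x else 0"
  let ?F = "{f. \<forall>x. (x \<in> {0..<int k} \<longrightarrow> f x \<in> (\<Union>y\<in>{0..<int k}. B y)) \<and> (x \<notin> {0..<int k} \<longrightarrow> f x = 0)}"
  have "finite ?F" by (rule finite_set_of_finite_funs) (auto intro: assms)
  moreover have "?restrict ` ?M \<subseteq> ?F" by fastforce
  moreover have "inj_on ?restrict ?M"
  proof (rule inj_onI)
    fix a b assume "a \<in> ?M" "b \<in> ?M" and e: "?restrict a = ?restrict b"
    show "a = b"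
    proof (rule cylindric_eqI)
      fix x assume "0 \<le> x" "x < int k"
      then show "a x = b x" using fun_cong[OF e, of x] by simp
    qed (use \<open>a \<in> ?M\<close> \<open>b \<in> ?M\<close> in auto)
  qed
  ultimately show ?thesis by (meson finite_imageD finite_subset)
qed

lemma finite_lower_shapes:
  assumes c: "cylindric k n nu"
  shows "finite (lower_shapes m nu)"
proof (rule finite_subset)
  show "lower_shapes m nu \<subseteq> {mu. cylindric k n mu \<and> (\<forall>x\<in>{0..<int k}. mu x \<in> {nu x - int m..nu x})}"
  proof
    fix mu assume mu: "mu \<in> lower_shapes m nu"
    have "mu x \<in> {nu x - int m..nu x}" if x: "x \<in> {0..<int k}" for x
    proof -
      have "nat (nu x - mu x) \<le> m"
        using mu x member_le_sum[of x "{0..<int k}" "\<lambda>x. nat (nu x - mu x)"]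
        by (auto simp: lower_shapes_def card_skew_boxes[OF c])
      moreover have "mu x \<le> nu x" using mu by (auto simp: lower_shapes_def subpart_def)
      ultimately show ?thesis by auto
    qed
    then show "mu \<in> {mu. cylindric k n mu \<and> (\<forall>x\<in>{0..<int k}. mu x \<in> {nu x - int m..nu x})}"
      using mu by (simp add: lower_shapes_def)
  qed
qed (rule finite_cylindric_bounded, simp)

lemma lower_shapes_0: "cylindric k n nu \<Longrightarrow> lower_shapes 0 nu = {nu}"
  using eq_if_card_skew_boxes_eq_0 by (auto simp: lower_shapes_def subpart_def)

lemma lower_shapes_below_cover:
  assumes "covers nu' nu"
  shows "{mu \<in> lower_shapes (Suc m) nu. subpart mu nu'} = lower_shapes m nu'"
proof -
  have c: "cylindric k n nu'" "cylindric k n nu" "subpart nu' nu" "card (skew_boxes k n nu nu') = 1"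
    using assms unfolding covers_def by auto
  have "card (skew_boxes k n nu mu) = Suc (card (skew_boxes k n nu' mu))"
    if "cylindric k n mu" "subpart mu nu'" for mu
    using card_skew_boxes_add[OF that(1) c(1,2) that(2) c(3)] c(4) by simp
  then show ?thesis unfolding lower_shapes_def using c(3) subpart_trans by auto
qed

lemma num_standard_self: "cylindric k n nu \<Longrightarrow> num_standard k n nu nu = 1"
  by (simp add: num_standard_eq_card_linear_extensions)

lemma sum_num_standard_lower_shapes:
  "cylindric k n nu \<Longrightarrow> (\<Sum>mu\<in>lower_shapes m nu. num_standard k n nu mu) = (down ^^ m) (\<lambda>_. 1) nu"
proof (induction m arbitrary: nu)
  case 0
  then show ?case by (simp add: lower_shapes_0 num_standard_self)
next
  case (Suc m)
  let ?C = "{nu'. covers nu' nu}"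
  have "(\<Sum>mu\<in>lower_shapes (Suc m) nu. num_standard k n nu mu)
      = (\<Sum>mu\<in>lower_shapes (Suc m) nu. \<Sum>nu' | nu' \<in> ?C \<and> subpart mu nu'. num_standard k n nu' mu)"
  proof (rule sum.cong[OF refl])
    fix mu assume "mu \<in> lower_shapes (Suc m) nu"
    then have "cylindric k n mu" "subpart mu nu" "skew_boxes k n nu mu \<noteq> {}"
      by (auto simp: lower_shapes_def)
    then show "num_standard k n nu mu = (\<Sum>nu' | nu' \<in> ?C \<and> subpart mu nu'. num_standard k n nu' mu)"
      using num_standard_eq_sum_lower_covers[OF Suc.prems] by simp
  qed
  also have "\<dots> = (\<Sum>nu'\<in>?C. \<Sum>mu | mu \<in> lower_shapes (Suc m) nu \<and> subpart mu nu'. num_standard k n nu' mu)"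
    by (rule sum.swap_restrict[OF finite_lower_shapes[OF Suc.prems] finite_lower_covers[OF Suc.prems]])
  also have "\<dots> = (\<Sum>nu'\<in>?C. (down ^^ m) (\<lambda>_. 1) nu')"
  proof (rule sum.cong[OF refl])
    fix nu' assume "nu' \<in> ?C"
    then have cv: "covers nu' nu" by simp
    then have "cylindric k n nu'" by (simp add: covers_def)
    then show "(\<Sum>mu | mu \<in> lower_shapes (Suc m) nu \<and> subpart mu nu'. num_standard k n nu' mu)
        = (down ^^ m) (\<lambda>_. 1) nu'"
      using lower_shapes_below_cover[OF cv] Suc.IH by simp
  qed
  also have "\<dots> = (down ^^ Suc m) (\<lambda>_. 1) nu" by (simp add: down_def)
  finally show ?case .
qed

lemma upper_shapes_eq_image:
  "{lam. cylindric k n lam \<and> subpart nu lam \<and> card (skew_boxes k n lam nu) = m}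
     = dual_part ` lower_shapes m (dual_part nu)"
proof -
  have "{lam. cylindric k n lam \<and> subpart nu lam \<and> card (skew_boxes k n lam nu) = m}
      = {lam. dual_part lam \<in> lower_shapes m (dual_part nu)}"
    by (simp add: lower_shapes_def card_skew_boxes_dual_part subpart_dual_part_iff)
  also have "\<dots> = dual_part ` lower_shapes m (dual_part nu)"
    by (auto simp: image_iff) (metis dual_part_dual_part)
  finally show ?thesis .
qed

lemma sum_num_standard_upper_shapes:
  assumes c: "cylindric k n nu"
  shows "(\<Sum>lam | cylindric k n lam \<and> subpart nu lam \<and> card (skew_boxes k n lam nu) = m.
            num_standard k n lam nu) = (up ^^ m) (\<lambda>_. 1) nu"
proof -
  have "(\<Sum>lam | cylindric k n lam \<and> subpart nu lam \<and> card (skew_boxes k n lam nu) = m.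
            num_standard k n lam nu)
      = (\<Sum>mu\<in>lower_shapes m (dual_part nu). num_standard k n (dual_part mu) (dual_part (dual_part nu)))"
    unfolding upper_shapes_eq_image by (simp add: sum.reindex inj_on_def)
  also have "\<dots> = (\<Sum>mu\<in>lower_shapes m (dual_part nu). num_standard k n (dual_part nu) mu)"
    using c by (intro sum.cong refl num_standard_dual_part) (simp_all add: lower_shapes_def)
  also have "\<dots> = (down ^^ m) (\<lambda>_. 1) (dual_part nu)"
    using c by (simp add: sum_num_standard_lower_shapes)
  also have "\<dots> = (up ^^ m) (\<lambda>_. 1) nu"
    by (rule down_power_involution) (simp_all add: covers_dual_part_iff)
  finally show ?thesis .
qed

end

theorem mainTheorem7:
  fixes k n m :: nat and alpha :: "int \<Rightarrow> int"
  assumes "1 \<le> k" and "k < n"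
    and "cylindric k n alpha"
  shows "(\<Sum>mu \<in> {mu. cylindric k n mu \<and> subpart mu alpha
                      \<and> card (skew_boxes k n alpha mu) = m}.
             num_standard k n alpha mu)
       = (\<Sum>lam \<in> {lam. cylindric k n lam \<and> subpart alpha lam
                      \<and> card (skew_boxes k n lam alpha) = m}.
             num_standard k n lam alpha)"
proof -
  interpret cylinder k n using assms(1,2) by unfold_locales
  have "(\<Sum>mu\<in>lower_shapes m alpha. num_standard k n alpha mu) = (down ^^ m) (\<lambda>_. 1) alpha"
    by (rule sum_num_standard_lower_shapes[OF assms(3)])
  also have "\<dots> = (up ^^ m) (\<lambda>_. 1) alpha"
    by (rule down_power_eq_up_power[OF assms(3)])
  also have "\<dots> = (\<Sum>lam | cylindric k n lam \<and> subpart alpha lam \<and> card (skew_boxes k n lam alpha) = m.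
                    num_standard k n lam alpha)"
    by (rule sum_num_standard_upper_shapes[OF assms(3), symmetric])
  finally show ?thesis unfolding lower_shapes_def .
qed

end
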